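(* Let $\mathfrak{g}=(V,[\,,])$ be a $2$-step nilpotent Lie algebra over $K$ and let $x\cdot y$ be a pre-Lie algebra structure on $\mathfrak{g}$. Then $x\circ y=\frac12(x\cdot y+y\cdot x)$ defines a CPA-structure on $\mathfrak{g}$ if and only if every left multiplication $L(x)$, $L(x)(y)=x\cdot y$, is a derivation of $\mathfrak{g}$. If in this situation (all $L(x)$ derivations) moreover $Z(\mathfrak{g})\subseteq[\mathfrak{g},\mathfrak{g}]$, then all $L(x)$ are nilpotent.
   Context: $K$ is a field of characteristic zero and $V$ a finite-dimensional $K$-vector space. A pre-Lie algebra structure on a Lie algebra $\mathfrak{g}=(V,[\,,])$ is a bilinear product $x\cdot y$ on $V$ with $x\cdot y-y\cdot x=[x,y]$ and $[x,y]\cdot z=x\cdot(y\cdot z)-y\cdot(x\cdot z)$ for all $x,y,z$. A commutative post-Lie algebra structure (CPA-structure) on a Lie algebra $(V,[\,,])$ is a bilinear product $x\circ y$ on $V$ with $x\circ y=y\circ x$, $[x,y]\circ z=x\circ(y\circ z)-y\circ(x\circ z)$, and $x\circ[y,z]=[x\circ y,z]+[y,x\circ z]$ for all $x,y,z$. A Lie algebra is called $2$-step nilpotent here if it is nilpotent of class at most $2$, i.e. all brackets $[[x,y],z]$ vanish. $Z(\mathfrak{g})$ denotes the center. *)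

theory Defs
  imports Complex_Main
begin

definition bilinear_prod :: "('k::field \<Rightarrow> 'v::ab_group_add \<Rightarrow> 'v) \<Rightarrow> ('v \<Rightarrow> 'v \<Rightarrow> 'v) \<Rightarrow> bool" where
  "bilinear_prod sc m \<longleftrightarrow>
     (\<forall>x. Vector_Spaces.linear sc sc (m x)) \<and> (\<forall>y. Vector_Spaces.linear sc sc (\<lambda>x. m x y))"

definition lie_algebra :: "('k::field \<Rightarrow> 'v::ab_group_add \<Rightarrow> 'v) \<Rightarrow> ('v \<Rightarrow> 'v \<Rightarrow> 'v) \<Rightarrow> bool" where
  "lie_algebra sc br \<longleftrightarrow> bilinear_prod sc br \<and> (\<forall>x. br x x = 0) \<and>
     (\<forall>x y z. br x (br y z) + br y (br z x) + br z (br x y) = 0)"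

definition two_step_nilpotent :: "('v \<Rightarrow> 'v \<Rightarrow> 'v::ab_group_add) \<Rightarrow> bool" where
  "two_step_nilpotent br \<longleftrightarrow> (\<forall>x y z. br (br x y) z = 0)"

definition pre_lie_structure :: "('k::field \<Rightarrow> 'v::ab_group_add \<Rightarrow> 'v) \<Rightarrow> ('v \<Rightarrow> 'v \<Rightarrow> 'v) \<Rightarrow> ('v \<Rightarrow> 'v \<Rightarrow> 'v) \<Rightarrow> bool" where
  "pre_lie_structure sc br p \<longleftrightarrow> bilinear_prod sc p \<and>
     (\<forall>x y. p x y - p y x = br x y) \<and>
     (\<forall>x y z. p (br x y) z = p x (p y z) - p y (p x z))"

definition CPA_structure :: "('k::field \<Rightarrow> 'v::ab_group_add \<Rightarrow> 'v) \<Rightarrow> ('v \<Rightarrow> 'v \<Rightarrow> 'v) \<Rightarrow> ('v \<Rightarrow> 'v \<Rightarrow> 'v) \<Rightarrow> bool" where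
  "CPA_structure sc br c \<longleftrightarrow> bilinear_prod sc c \<and>
     (\<forall>x y. c x y = c y x) \<and>
     (\<forall>x y z. c (br x y) z = c x (c y z) - c y (c x z)) \<and>
     (\<forall>x y z. c x (br y z) = br (c x y) z + br y (c x z))"

definition lie_derivation :: "('k::field \<Rightarrow> 'v::ab_group_add \<Rightarrow> 'v) \<Rightarrow> ('v \<Rightarrow> 'v \<Rightarrow> 'v) \<Rightarrow> ('v \<Rightarrow> 'v) \<Rightarrow> bool" where
  "lie_derivation sc br D \<longleftrightarrow> Vector_Spaces.linear sc sc D \<and>
     (\<forall>x y. D (br x y) = br (D x) y + br x (D y))"

definition lie_center :: "('v \<Rightarrow> 'v \<Rightarrow> 'v::ab_group_add) \<Rightarrow> 'v set" where
  "lie_center br = {z. \<forall>x. br z x = 0}"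

definition derived_algebra :: "('k::field \<Rightarrow> 'v::ab_group_add \<Rightarrow> 'v) \<Rightarrow> ('v \<Rightarrow> 'v \<Rightarrow> 'v) \<Rightarrow> 'v set" where
  "derived_algebra sc br = module.span sc {br x y | x y. True}"

definition nilpotent_map :: "('v \<Rightarrow> 'v::zero) \<Rightarrow> bool" where
  "nilpotent_map f \<longleftrightarrow> (\<exists>n. (f ^^ n) = (\<lambda>_. 0))"

end

theory Submission
  imports Defs
begin

text \<open>Write the symmetrised product as \<open>x \<circ> y = x\<cdot>y - \<onehalf>[x,y]\<close>. Since \<open>\<g>\<close> is 2-step
  nilpotent, \<open>\<onehalf>[x,[y,z]]\<close> and \<open>\<onehalf>[[x,y],z]\<close> vanish, so the derivation axiom for \<open>\<circ>\<close> is
  literally the derivation property of \<open>L(x)\<close>, and given it, left-symmetry of \<open>\<circ>\<close>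
  reduces to \<open>[[x,y],z] = 0\<close>.

  When all \<open>L(x)\<close> are derivations, the pre-Lie product preserves the centre \<open>Z\<close> and
  becomes commutative and associative modulo \<open>Z\<close>. If moreover \<open>Z \<subseteq> [\<g>,\<g>]\<close>, then
  products of central elements vanish, and this forces every idempotent modulo \<open>Z\<close> to be
  central. By finite dimension the images of \<open>L(x)\<^sup>k\<close> modulo \<open>Z\<close> stabilise, and a
  Fitting-type argument produces an idempotent unit on the stable image; it is central,
  so \<open>L(x)\<^sup>n\<close> maps into \<open>Z\<close>. Then \<open>L(x)\<^sup>2\<^sup>n\<close> kills \<open>[\<g>,\<g>] \<supseteq> Z\<close> by the
  Leibniz rule, and \<open>L(x)\<close> is nilpotent.\<close>

locale two_step_pre_lie = vector_space sc
  for sc :: "'k::field_char_0 \<Rightarrow> 'v::ab_group_add \<Rightarrow> 'v" +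
  fixes br p :: "'v \<Rightarrow> 'v \<Rightarrow> 'v"
  assumes bilinear_br: "bilinear_prod sc br"
    and two_step: "two_step_nilpotent br"
    and pre_lie: "pre_lie_structure sc br p"
begin

lemma br_add: "br (x + y) z = br x z + br y z" "br x (y + z) = br x y + br x z"
  and br_scale: "br (sc c x) y = sc c (br x y)" "br x (sc c y) = sc c (br x y)"
  using bilinear_br by (simp_all add: bilinear_prod_def Vector_Spaces.linear_iff)

lemma p_add: "p (x + y) z = p x z + p y z" "p x (y + z) = p x y + p x z"
  and p_scale: "p (sc c x) y = sc c (p x y)" "p x (sc c y) = sc c (p x y)"
  using pre_lie by (simp_all add: pre_lie_structure_def bilinear_prod_def Vector_Spaces.linear_iff)

lemma additive_br: "additive (\<lambda>x. br x z)" "additive (br z)"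
  and additive_p: "additive (\<lambda>x. p x z)" "additive (p z)"
  by unfold_locales (simp_all add: br_add p_add)

lemmas br_diff = additive_br[THEN additive.diff] and br_minus = additive_br[THEN additive.minus]
  and br_zero = additive_br[THEN additive.zero]
  and p_diff = additive_p[THEN additive.diff] and p_minus = additive_p[THEN additive.minus]
  and p_zero = additive_p[THEN additive.zero]

lemma br_br_left [simp]: "br (br x y) z = 0"
  using two_step by (simp add: two_step_nilpotent_def)

lemma p_commutator: "p x y - p y x = br x y"
  using pre_lie by (simp add: pre_lie_structure_def)

lemma p_left_symmetric: "p (br x y) z = p x (p y z) - p y (p x z)"
  using pre_lie by (simp add: pre_lie_structure_def)

lemma br_antisym: "br y x = - br x y"
  by (metis minus_diff_eq p_commutator)

lemma br_br_right [simp]: "br x (br y z) = 0"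
  by (metis br_antisym br_br_left neg_equal_0_iff_equal)

lemmas bilinear_simps [simp] =
  br_add br_scale br_diff br_minus br_zero p_add p_scale p_diff p_minus p_zero

lemma half_double: "sc (1/2) (u + u) = u"
proof -
  have "sc (1/2) (u + u) = sc (1/2 + 1/2) u"
    by (simp only: scale_right_distrib scale_left_distrib)
  then show ?thesis
    by simp
qed

definition sym_prod :: "'v \<Rightarrow> 'v \<Rightarrow> 'v" where
  "sym_prod x y = sc (1/2) (p x y + p y x)"

lemma sym_prod_eq: "sym_prod x y = p x y - sc (1/2) (br x y)"
proof -
  have "p y x = p x y - br x y"
    using p_commutator[of x y] by (simp add: algebra_simps)
  then have "sym_prod x y = sc (1/2) ((p x y + p x y) - br x y)"
    by (simp add: sym_prod_def add_diff_eq)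
  then show ?thesis
    by (simp only: scale_right_diff_distrib half_double)
qed

lemma sym_prod_commute: "sym_prod x y = sym_prod y x"
  by (simp add: sym_prod_def add.commute)

lemma bilinear_sym_prod: "bilinear_prod sc sym_prod"
  by (simp add: bilinear_prod_def Vector_Spaces.linear_iff vector_space_axioms sym_prod_eq
      algebra_simps scale_right_distrib scale_right_diff_distrib)

lemma sym_prod_br_left: "sym_prod (br x y) z = p (br x y) z"
  and sym_prod_br_right: "sym_prod x (br y z) = p x (br y z)"
  and br_sym_prod: "br (sym_prod x y) z = br (p x y) z" "br y (sym_prod x z) = br y (p x z)"
  by (simp_all add: sym_prod_eq)

lemma sym_prod_derivation_iff:
  "sym_prod x (br y z) = br (sym_prod x y) z + br y (sym_prod x z)
     \<longleftrightarrow> p x (br y z) = br (p x y) z + br y (p x z)"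
  by (simp add: sym_prod_br_right br_sym_prod)

text \<open>The defect of left-symmetry of \<open>sym_prod\<close> is half of
  \<open>L(x)[y,z] + [x, yz] - L(y)[x,z] - [y, xz]\<close>, which for derivations \<open>L(x), L(y)\<close>
  collapses to \<open>[[x,y],z] = 0\<close>.\<close>
lemma sym_prod_left_symmetric:
  assumes derivation: "\<And>x y z. p x (br y z) = br (p x y) z + br y (p x z)"
  shows "sym_prod (br x y) z = sym_prod x (sym_prod y z) - sym_prod y (sym_prod x z)"
proof -
  have defect: "p x (br y z) + br x (p y z) - p y (br x z) - br y (p x z) = 0"
  proof -
    have "p x (br y z) + br x (p y z) - p y (br x z) - br y (p x z) = br (p x y - p y x) z"
      by (simp add: derivation algebra_simps)
    then show ?thesis
      by (simp add: p_commutator)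
  qed
  have "sym_prod x (sym_prod y z) - sym_prod y (sym_prod x z)
      = (p x (p y z) - p y (p x z))
        - sc (1/2) (p x (br y z) + br x (p y z) - p y (br x z) - br y (p x z))"
    by (simp add: sym_prod_eq algebra_simps scale_right_distrib scale_right_diff_distrib)
  then show ?thesis
    by (simp add: defect sym_prod_br_left p_left_symmetric)
qed

theorem CPA_sym_prod_iff_derivations:
  "CPA_structure sc br sym_prod \<longleftrightarrow> (\<forall>x. lie_derivation sc br (p x))"
proof
  assume "CPA_structure sc br sym_prod"
  then show "\<forall>x. lie_derivation sc br (p x)"
    using bilinear_sym_prod pre_lie sym_prod_derivation_iff
    by (auto simp: CPA_structure_def lie_derivation_def pre_lie_structure_def bilinear_prod_def)
next
  assume "\<forall>x. lie_derivation sc br (p x)"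
  then have "p x (br y z) = br (p x y) z + br y (p x z)" for x y z
    by (simp add: lie_derivation_def)
  then show "CPA_structure sc br sym_prod"
    unfolding CPA_structure_def
    using bilinear_sym_prod sym_prod_commute sym_prod_left_symmetric sym_prod_derivation_iff
    by blast
qed

end

lemma (in finite_dimensional_vector_space) descending_subspace_chain_stabilizes:
  assumes subspace: "\<And>k. subspace (W k)" and descending: "\<And>k. W (Suc k) \<subseteq> W k"
  shows "\<exists>n. W (Suc n) = W n"
proof (rule ccontr)
  assume "\<nexists>n. W (Suc n) = W n"
  then have "W (Suc k) \<subset> W k" for k
    using descending by blast
  then have dim_decreasing: "dim (W (Suc k)) < dim (W k)" for k
    by (simp add: dim_psubset span_eq_iff[THEN iffD2, OF subspace])
  have "dim (W k) + k \<le> dim (W 0)" for k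
  proof (induction k)
    case (Suc k)
    then show ?case
      using dim_decreasing[of k] by simp
  qed simp
  from this[of "Suc (dim (W 0))"] show False
    by simp
qed

context two_step_pre_lie
begin

abbreviation Z :: "'v set" where
  "Z \<equiv> lie_center br"

abbreviation cong_center :: "'v \<Rightarrow> 'v \<Rightarrow> bool" (infix "\<approx>" 50) where
  "u \<approx> v \<equiv> u - v \<in> Z"

lemma subspace_center: "subspace Z"
  by (auto simp: subspace_def lie_center_def)

lemma center_iff: "z \<in> Z \<longleftrightarrow> (\<forall>x. br z x = 0)"
  by (simp add: lie_center_def)

lemma br_center_left: "z \<in> Z \<Longrightarrow> br z x = 0"
  by (simp add: center_iff)

lemma br_center_right: "z \<in> Z \<Longrightarrow> br x z = 0"
  using br_antisym[of z x] by (simp add: center_iff)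

lemma br_in_center: "br u v \<in> Z"
  by (simp add: center_iff)

lemma zero_in_center [simp]: "0 \<in> Z"
  by (rule subspace_0[OF subspace_center])

lemma cong_refl: "u \<approx> u"
  by simp

lemma cong_sym: "u \<approx> v \<Longrightarrow> v \<approx> u"
  using subspace_neg[OF subspace_center, of "u - v"] by simp

lemma cong_trans [trans]: "u \<approx> v \<Longrightarrow> v \<approx> w \<Longrightarrow> u \<approx> w"
  using subspace_add[OF subspace_center, of "u - v" "v - w"] by simp

lemma cong_add: "u \<approx> u' \<Longrightarrow> v \<approx> v' \<Longrightarrow> u + v \<approx> u' + v'"
  using subspace_add[OF subspace_center, of "u - u'" "v - v'"] by (simp add: algebra_simps)

lemma cong_scale: "u \<approx> v \<Longrightarrow> sc c u \<approx> sc c v"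
  using subspace_scale[OF subspace_center, of "u - v" c] by (simp add: scale_right_diff_distrib)

lemma p_center_commute: "z \<in> Z \<Longrightarrow> p z u = p u z"
  using p_commutator[of z u] by (simp add: br_center_left)

lemma p_commute_cong: "p u v \<approx> p v u"
  by (simp add: p_commutator br_in_center)

lemma p_assoc_center: assumes "z \<in> Z" shows "p y (p w z) = p (p y w) z"
  using p_left_symmetric[of z y w] p_center_commute[OF assms, of w]
    p_center_commute[OF assms, of "p y w"] assms by (simp add: br_center_left)

end

locale two_step_pre_lie_derivations = two_step_pre_lie sc br p
  for sc :: "'k::field_char_0 \<Rightarrow> 'v::ab_group_add \<Rightarrow> 'v" and br p +
  assumes derivation: "p x (br y z) = br (p x y) z + br y (p x z)"
    and center_derived: "lie_center br \<subseteq> span {br x y | x y. True}"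
begin

lemma p_center_right: assumes "z \<in> Z" shows "p u z \<in> Z"
proof -
  have "br (p u z) y = 0" for y
    using derivation[of u z y] assms by (simp add: br_center_left)
  then show ?thesis
    by (simp add: center_iff)
qed

lemma p_center_left: "z \<in> Z \<Longrightarrow> p z u \<in> Z"
  by (simp add: p_center_commute p_center_right)

lemma p_cong_right: "v \<approx> w \<Longrightarrow> p u v \<approx> p u w"
  using p_center_right[of "v - w" u] by simp

lemma p_cong_left: "v \<approx> w \<Longrightarrow> p v u \<approx> p w u"
  using p_center_left[of "v - w" u] by simp

lemma p_assoc_cong: "p a (p b c) \<approx> p (p a b) c"
proof -
  have "p a (p b c) \<approx> p a (p c b)"
    by (rule p_cong_right[OF p_commute_cong])
  also have "p a (p c b) \<approx> p c (p a b)"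
    using p_center_left[OF br_in_center[of a c], of b] by (simp add: p_left_symmetric)
  also have "p c (p a b) \<approx> p (p a b) c"
    by (rule p_commute_cong)
  finally show ?thesis .
qed

lemma p_center_center: assumes "z \<in> Z" and "w \<in> Z" shows "p z w = 0"
proof -
  have "w \<in> span {br x y | x y. True}"
    using \<open>w \<in> Z\<close> center_derived by blast
  moreover have "subspace {w. p z w = 0}"
    by (simp add: subspace_def)
  moreover have "p z (br a b) = 0" for a b
    using p_center_left[OF \<open>z \<in> Z\<close>] by (simp add: derivation br_center_left br_center_right)
  ultimately show ?thesis
    using span_subspace_induct[of w _ "{w. p z w = 0}"] by blast
qed

context
  fixes e
  assumes idempotent: "p e e \<approx> e"
begin

lemma left_mult_idempotent_on_center: "w \<in> Z \<Longrightarrow> p e (p e w) = p e w"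
  using p_assoc_center[of w e e] p_center_center[OF idempotent] by simp

lemma left_mult_idempotent_cong: "p e (p e y) \<approx> p e y"
proof -
  have "p e (p e y) \<approx> p (p e e) y"
    by (rule p_assoc_cong)
  also have "p (p e e) y \<approx> p e y"
    by (rule p_cong_left[OF idempotent])
  finally show ?thesis .
qed

lemma br_idempotent_image: "br e (p e y) = 0"
proof -
  define u where "u = p e y"
  define w where "w = br e u"
  have "br e (p e u) = br e u"
    using br_center_right[OF left_mult_idempotent_cong[of y]] by (simp add: u_def)
  then have "p e w = w + w"
    using derivation[of e e u] br_center_left[OF idempotent, of u] by (simp add: w_def)
  moreover have "p e (p e w) = p e w"
    by (simp add: left_mult_idempotent_on_center w_def br_in_center)
  ultimately have "w + w = 0"
    by simp
  then have "sc 2 w = 0"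
    using scale_left_distrib[of 1 1 w] by simp
  then show ?thesis
    by (simp add: w_def u_def)
qed

lemma br_idempotent_kernel: "br e (y - p e y) = 0"
proof -
  define y0 where "y0 = y - p e y"
  define z0 where "z0 = p e e - e"
  define w where "w = br e y0"
  define q where "q = p y0 e"
  have z0: "z0 \<in> Z"
    using idempotent by (simp add: z0_def)
  have ey0: "p e y0 \<in> Z"
    using cong_sym[OF left_mult_idempotent_cong[of y]] by (simp add: y0_def)
  have q: "q \<in> Z"
    using p_commutator[of e y0] subspace_diff[OF subspace_center ey0 br_in_center[of e y0]]
    by (simp add: q_def w_def algebra_simps)
  have pw: "p e w = w"
    using derivation[of e e y0] br_center_left[OF z0, of y0] br_center_right[OF ey0, of e]
    by (simp add: w_def z0_def)
  have "w = p w e"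
    using p_center_commute[OF br_in_center[of e y0], of e] pw by (simp add: w_def)
  also have "\<dots> = p e q - (q + p y0 z0)"
    using p_left_symmetric[of e y0 e] by (simp add: w_def q_def z0_def)
  finally have "p e w = p e (p e q) - p e q - p e (p y0 z0)"
    by simp
  also have "\<dots> = - p (p e y0) z0"
    by (simp add: left_mult_idempotent_on_center[OF q] p_assoc_center[OF z0])
  also have "\<dots> = 0"
    by (simp add: p_center_center[OF ey0 z0])
  finally show ?thesis
    using pw by (simp add: w_def y0_def)
qed

lemma idempotent_mod_center_in_center: "e \<in> Z"
proof -
  have "br e y = 0" for y
    using br_idempotent_image[of y] br_idempotent_kernel[of y] by simp
  then show ?thesis
    by (simp add: center_iff)
qed

end

lemma funpow_p_add: "(p x ^^ k) (a + b) = (p x ^^ k) a + (p x ^^ k) b"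
  and funpow_p_diff: "(p x ^^ k) (a - b) = (p x ^^ k) a - (p x ^^ k) b"
  and funpow_p_scale: "(p x ^^ k) (sc c a) = sc c ((p x ^^ k) a)"
  and funpow_p_zero: "(p x ^^ k) 0 = 0"
  by (induction k) simp_all

lemma funpow_p_center: "z \<in> Z \<Longrightarrow> (p x ^^ k) z \<in> Z"
  by (induction k) (simp_all add: p_center_right)

lemma funpow_p_cong: "u \<approx> v \<Longrightarrow> (p x ^^ k) u \<approx> (p x ^^ k) v"
  using funpow_p_center[where z = "u - v" and x = x and k = k] by (simp add: funpow_p_diff)

lemma funpow_derivation_br_vanish:
  assumes into_center: "\<And>v. (p x ^^ n) v \<in> Z" and "2 * n \<le> i + j + k"
  shows "(p x ^^ k) (br ((p x ^^ i) b) ((p x ^^ j) c)) = 0"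
  using \<open>2 * n \<le> i + j + k\<close>
proof (induction k arbitrary: i j)
  case 0
  have "(p x ^^ m) v \<in> Z" if "n \<le> m" for m v
  proof -
    have "(p x ^^ m) v = (p x ^^ (m - n)) ((p x ^^ n) v)"
      using that by (metis funpow_add le_add_diff_inverse2 comp_apply)
    then show ?thesis
      using funpow_p_center[OF into_center] by simp
  qed
  moreover from 0 have "n \<le> i \<or> n \<le> j"
    by arith
  ultimately show ?case
    using br_center_left br_center_right by auto
next
  case (Suc k)
  have "(p x ^^ Suc k) (br ((p x ^^ i) b) ((p x ^^ j) c))
      = (p x ^^ k) (p x (br ((p x ^^ i) b) ((p x ^^ j) c)))"
    by (simp add: funpow_Suc_right del: funpow.simps)
  also have "\<dots> = (p x ^^ k) (br ((p x ^^ Suc i) b) ((p x ^^ j) c))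
      + (p x ^^ k) (br ((p x ^^ i) b) ((p x ^^ Suc j) c))"
    by (simp add: derivation funpow_p_add)
  also have "\<dots> = 0"
    using Suc.IH[of "Suc i" j] Suc.IH[of i "Suc j"] Suc.prems by simp
  finally show ?case .
qed

text \<open>If \<open>L(x)\<^sup>n\<close> maps into the centre, then \<open>L(x)\<^sup>2\<^sup>n\<close> kills all brackets, hence
  (as \<open>Z \<subseteq> [g,g]\<close>) the centre, so \<open>L(x)\<^sup>3\<^sup>n = 0\<close>.\<close>
lemma nilpotent_if_power_into_center:
  assumes into_center: "\<And>v. (p x ^^ n) v \<in> Z"
  shows "nilpotent_map (p x)"
proof -
  have kills_center: "(p x ^^ (2 * n)) z = 0" if "z \<in> Z" for z
  proof -
    have "z \<in> span {br a b | a b. True}"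
      using that center_derived by blast
    moreover have "subspace {w. (p x ^^ (2 * n)) w = 0}"
      by (simp add: subspace_def funpow_p_add funpow_p_scale funpow_p_zero)
    moreover have "(p x ^^ (2 * n)) (br a b) = 0" for a b
      using funpow_derivation_br_vanish[OF into_center, of 0 0 "2 * n" a b] by simp
    ultimately show ?thesis
      using span_subspace_induct[of z _ "{w. (p x ^^ (2 * n)) w = 0}"] by blast
  qed
  have "(p x ^^ (2 * n + n)) v = 0" for v
    using kills_center[OF into_center[of v]] by (simp only: funpow_add comp_apply)
  then show ?thesis
    unfolding nilpotent_map_def by blast
qed

definition image_mod_center :: "'v \<Rightarrow> nat \<Rightarrow> 'v set" where
  "image_mod_center x k = {u. \<exists>v. u \<approx> (p x ^^ k) v}"

lemma subspace_image_mod_center: "subspace (image_mod_center x k)"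
  unfolding subspace_def image_mod_center_def
proof (intro conjI ballI allI)
  show "0 \<in> {u. \<exists>v. u \<approx> (p x ^^ k) v}"
  proof
    show "\<exists>v. 0 \<approx> (p x ^^ k) v"
      using cong_refl[of 0] by (metis funpow_p_zero)
  qed
next
  fix a b assume "a \<in> {u. \<exists>v. u \<approx> (p x ^^ k) v}" "b \<in> {u. \<exists>v. u \<approx> (p x ^^ k) v}"
  then obtain v w where "a \<approx> (p x ^^ k) v" "b \<approx> (p x ^^ k) w"
    by blast
  then have "a + b \<approx> (p x ^^ k) (v + w)"
    by (simp add: cong_add funpow_p_add)
  then show "a + b \<in> {u. \<exists>v. u \<approx> (p x ^^ k) v}"
    by blast
next
  fix c a assume "a \<in> {u. \<exists>v. u \<approx> (p x ^^ k) v}"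
  then obtain v where "a \<approx> (p x ^^ k) v"
    by blast
  then have "sc c a \<approx> (p x ^^ k) (sc c v)"
    by (simp add: cong_scale funpow_p_scale)
  then show "sc c a \<in> {u. \<exists>v. u \<approx> (p x ^^ k) v}"
    by blast
qed

lemma funpow_in_image_mod_center: "(p x ^^ k) v \<in> image_mod_center x k"
  unfolding image_mod_center_def using cong_refl by blast

lemma image_mod_center_Suc_subset: "image_mod_center x (Suc k) \<subseteq> image_mod_center x k"
  unfolding image_mod_center_def by (auto simp: funpow_Suc_right simp del: funpow.simps)

lemma image_mod_center_stabilizes:
  assumes "finite_dimensional_vector_space sc B"
  shows "\<exists>n. image_mod_center x (Suc n) = image_mod_center x n"
proof -
  interpret finite_dimensional_vector_space sc B by fact
  show ?thesis
    by (rule descending_subspace_chain_stabilizes[where W = "image_mod_center x",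
          OF subspace_image_mod_center image_mod_center_Suc_subset])
qed

lemma p_power_cong: "p ((p x ^^ k) x) u \<approx> (p x ^^ Suc k) u"
proof (induction k arbitrary: u)
  case 0
  show ?case
    by simp
next
  case (Suc k)
  have "p ((p x ^^ Suc k) x) u \<approx> p x (p ((p x ^^ k) x) u)"
    using cong_sym[OF p_assoc_cong] by simp
  also have "p x (p ((p x ^^ k) x) u) \<approx> p x ((p x ^^ Suc k) u)"
    by (rule p_cong_right[OF Suc.IH])
  finally show ?case
    by simp
qed

lemma image_mod_center_stable_power:
  assumes stable: "image_mod_center x (Suc n) = image_mod_center x n"
    and u: "u \<in> image_mod_center x n"
  shows "\<exists>v \<in> image_mod_center x n. u \<approx> (p x ^^ m) v"
proof (induction m)
  case 0
  show ?case
    using u by (intro bexI[of _ u]) simp_all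
next
  case (Suc m)
  then obtain v where v: "v \<in> image_mod_center x n" "u \<approx> (p x ^^ m) v"
    by blast
  with stable obtain w where "v \<approx> p x ((p x ^^ n) w)"
    by (auto simp: image_mod_center_def)
  then have "u \<approx> (p x ^^ Suc m) ((p x ^^ n) w)"
    using cong_trans[OF v(2) funpow_p_cong] by (simp add: funpow_Suc_right del: funpow.simps)
  then show ?case
    using funpow_in_image_mod_center by blast
qed

text \<open>A Fitting-type argument: once the images of \<open>L(x)\<^sup>k\<close> modulo the centre stabilise,
  \<open>L(x)\<close> is surjective on the stable image \<open>W\<close>, and a preimage \<open>e\<close> of \<open>x\<^sup>n\<close> under
  \<open>L(x\<^sup>n) \<approx> L(x)\<^sup>n\<^sup>+\<^sup>1\<close> is a unit of \<open>W\<close> modulo the centre.\<close>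
lemma image_mod_center_unit:
  assumes stable: "image_mod_center x (Suc n) = image_mod_center x n"
  obtains e where "e \<in> image_mod_center x n" and "\<And>u. u \<in> image_mod_center x n \<Longrightarrow> p e u \<approx> u"
proof -
  define x0 where "x0 = (p x ^^ n) x"
  obtain e where e: "e \<in> image_mod_center x n" and "x0 \<approx> (p x ^^ Suc n) e"
    using image_mod_center_stable_power[OF stable funpow_in_image_mod_center[where v = x],
        where m = "Suc n"]
    by (auto simp: x0_def)
  then have x0_e: "x0 \<approx> p x0 e"
    using cong_trans cong_sym[OF p_power_cong] by (auto simp: x0_def)
  have "p e u \<approx> u" if u: "u \<in> image_mod_center x n" for u
  proof -
    obtain v where "u \<approx> (p x ^^ Suc n) v"
      using image_mod_center_stable_power[OF stable u, where m = "Suc n"] by blast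
    then have u_v: "u \<approx> p x0 v"
      using cong_trans cong_sym[OF p_power_cong] by (auto simp: x0_def)
    have "p e u \<approx> p e (p x0 v)"
      by (rule p_cong_right[OF u_v])
    also have "p e (p x0 v) \<approx> p (p e x0) v"
      by (rule p_assoc_cong)
    also have "p (p e x0) v \<approx> p (p x0 e) v"
      by (rule p_cong_left[OF p_commute_cong])
    also have "p (p x0 e) v \<approx> p x0 v"
      by (rule p_cong_left[OF cong_sym[OF x0_e]])
    also have "p x0 v \<approx> u"
      by (rule cong_sym[OF u_v])
    finally show ?thesis .
  qed
  with e show ?thesis
    using that by blast
qed

lemma power_into_center_if_stable:
  assumes stable: "image_mod_center x (Suc n) = image_mod_center x n"
  shows "(p x ^^ n) v \<in> Z"
proof -
  obtain e where e: "e \<in> image_mod_center x n"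
    and unit: "\<And>u. u \<in> image_mod_center x n \<Longrightarrow> p e u \<approx> u"
    using image_mod_center_unit[OF stable] by blast
  have "e \<in> Z"
    by (rule idempotent_mod_center_in_center[OF unit[OF e]])
  then have "p e ((p x ^^ n) v) \<in> Z"
    by (rule p_center_left)
  moreover have "p e ((p x ^^ n) v) \<approx> (p x ^^ n) v"
    by (rule unit[OF funpow_in_image_mod_center])
  ultimately show ?thesis
    using subspace_diff[OF subspace_center] by fastforce
qed

theorem nilpotent_left_mult:
  assumes "finite_dimensional_vector_space sc B"
  shows "nilpotent_map (p x)"
proof -
  obtain n where "image_mod_center x (Suc n) = image_mod_center x n"
    using image_mod_center_stabilizes[OF assms] by blast
  then show ?thesis
    using nilpotent_if_power_into_center power_into_center_if_stable by blast
qed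

end

theorem mainTheorem6:
  fixes sc :: "'k::field_char_0 \<Rightarrow> 'v::ab_group_add \<Rightarrow> 'v"
    and B :: "'v set"
    and br p :: "'v \<Rightarrow> 'v \<Rightarrow> 'v"
  assumes "finite_dimensional_vector_space sc B"
    and "lie_algebra sc br"
    and "two_step_nilpotent br"
    and "pre_lie_structure sc br p"
  shows "(CPA_structure sc br (\<lambda>x y. sc (1/2) (p x y + p y x))
            \<longleftrightarrow> (\<forall>x. lie_derivation sc br (p x)))
       \<and> ((\<forall>x. lie_derivation sc br (p x)) \<and> lie_center br \<subseteq> derived_algebra sc br
            \<longrightarrow> (\<forall>x. nilpotent_map (p x)))"
proof -
  interpret finite_dimensional_vector_space sc B
    by fact
  interpret two_step_pre_lie sc br p
    using assms(2-4) by unfold_locales (simp_all add: lie_algebra_def)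
  have "nilpotent_map (p x)"
    if "\<forall>x. lie_derivation sc br (p x)" and "lie_center br \<subseteq> derived_algebra sc br" for x
  proof -
    interpret two_step_pre_lie_derivations sc br p
      using that by unfold_locales (auto simp: lie_derivation_def derived_algebra_def)
    show ?thesis
      by (rule nilpotent_left_mult[OF assms(1)])
  qed
  then show ?thesis
    using CPA_sym_prod_iff_derivations by (simp add: sym_prod_def[abs_def])
qed

end
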